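(* Let $\gamma\colon[0,1]\to(0,1)^d$ be a $1$-Lipschitz curve which is $\theta$-flat in direction $u\in\mathbb{S}^{d-1}$ around an interval $I\subseteq[0,1]$, where $\theta\in(0,1/3)$. Let $\varepsilon>0$ and let $f\colon[0,1]^d\to\mathbb{R}$ be Lipschitz with $\operatorname{Lip}(f)<1$. Then for every $\alpha\in(0,1)$ there exist an $\alpha$-conical function $f_{\varepsilon,I}$ (with respect to $\gamma$, $f$, $I$) and a closed Lebesgue-null set $N\subseteq I$ such that: (i) $\operatorname{Lip}(f_{\varepsilon,I})<1$ and $\|f_{\varepsilon,I}-f\|_\infty<\varepsilon$; (ii) there is $\tau\in(1-\alpha,1)$ such that for every connected component $J$ of $I\setminus N$ there is $p=p_J\in N$ with $f_{\varepsilon,I}(x)=f(\gamma(p))+\tau\|x-\gamma(p)\|$ for all $x\in\gamma(J)$, and $f_{\varepsilon,I}$ is continuously differentiable on an open neighbourhood $U_f(\gamma(J))$ of $\gamma(J)$ with $\nabla f_{\varepsilon,I}(x)=\tau\frac{x-\gamma(p)}{\|x-\gamma(p)\|}$ for all $x\in U_f(\gamma(J))$.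
   Context: A Lipschitz curve is a Lipschitz map $\gamma\colon I\to\mathbb{R}^d$, $I$ a closed interval, whose derivative is bounded away from zero in norm a.e. $\gamma$ is $\theta$-flat in direction $u$ around an interval $I$ if for all $t_1,t_2\in[0,1]$ with $\operatorname{dist}(t_i,I)<\mathcal{L}(I)$ (length of $I$) we have $\|\gamma(t_1)-\gamma(t_2)-(t_1-t_2)u\|\leq\theta|t_1-t_2|$. Given a $1$-Lipschitz curve $\gamma$, an interval $I\subseteq[0,1]$, a finite set $P\subseteq I$, a Lipschitz $f\colon[0,1]^d\to\mathbb{R}$ and $\sigma,\tau>0$, let $Y_{\sigma,I,P}=\{y\in[0,1]^d\colon\operatorname{dist}(y,\gamma(I))\geq\sigma\}\cup\gamma(P)$ and define the conical function $\Phi_{\gamma,f,I,P,\sigma,\tau}(x)=\inf_{y\in Y_{\sigma,I,P}}(f(y)+\tau\|x-y\|)$, $x\in[0,1]^d$. For $\alpha\in(0,1)$, such a function with $\tau>1-\alpha$ is called $\alpha$-conical. *)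

theory Defs
  imports "HOL-Analysis.Analysis"
begin

definition lipschitz_curve :: "real \<Rightarrow> (real \<Rightarrow> 'a::euclidean_space) \<Rightarrow> bool" where
  "lipschitz_curve L \<gamma> \<longleftrightarrow> L-lipschitz_on {0..1} \<gamma> \<and>
     (\<exists>c>0. AE t in lborel. t \<in> {0..1} \<longrightarrow>
        (\<exists>D. (\<gamma> has_vector_derivative D) (at t) \<and> c \<le> norm D))"

definition theta_flat ::
  "(real \<Rightarrow> 'a::euclidean_space) \<Rightarrow> real \<Rightarrow> 'a \<Rightarrow> real \<Rightarrow> real \<Rightarrow> bool" where
  "theta_flat \<gamma> \<theta> u a b \<longleftrightarrow>
     (\<forall>t1\<in>{0..1}. \<forall>t2\<in>{0..1}.
        infdist t1 {a..b} < b - a \<and> infdist t2 {a..b} < b - a \<longrightarrow>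
        norm (\<gamma> t1 - \<gamma> t2 - (t1 - t2) *\<^sub>R u) \<le> \<theta> * \<bar>t1 - t2\<bar>)"

definition conical_Y ::
  "(real \<Rightarrow> 'a::euclidean_space) \<Rightarrow> real \<Rightarrow> real \<Rightarrow> real set \<Rightarrow> real \<Rightarrow> 'a set" where
  "conical_Y \<gamma> a b P \<sigma> =
     {y \<in> cbox 0 One. \<sigma> \<le> infdist y (\<gamma> ` {a..b})} \<union> \<gamma> ` P"

definition conical_fun ::
  "(real \<Rightarrow> 'a::euclidean_space) \<Rightarrow> ('a \<Rightarrow> real) \<Rightarrow> real \<Rightarrow> real \<Rightarrow> real set
     \<Rightarrow> real \<Rightarrow> real \<Rightarrow> 'a \<Rightarrow> real" where
  "conical_fun \<gamma> f a b P \<sigma> \<tau> x =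
     (INF y \<in> conical_Y \<gamma> a b P \<sigma>. f y + \<tau> * norm (x - y))"

definition alpha_conical ::
  "real \<Rightarrow> (real \<Rightarrow> 'a::euclidean_space) \<Rightarrow> ('a \<Rightarrow> real) \<Rightarrow> real \<Rightarrow> real
     \<Rightarrow> ('a \<Rightarrow> real) \<Rightarrow> bool" where
  "alpha_conical \<alpha> \<gamma> f a b g \<longleftrightarrow>
     (\<exists>P \<sigma> \<tau>. finite P \<and> P \<subseteq> {a..b} \<and> \<sigma> > 0 \<and> \<tau> > 1 - \<alpha> \<and>
        (\<forall>x\<in>cbox 0 One. g x = conical_fun \<gamma> f a b P \<sigma> \<tau> x))"

end

theory Submission
  imports Defs
begin

(* The approximation is the infimal convolution g x = inf {f y + tau * norm (x - y). y in Y},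
   where Y consists of the points at distance at least sigma from the curve together with
   gamma ` P for a finite delta-net P of [a,b].  Since Lip f < tau, f <= g <= f + 2 (sigma + delta)
   and g is tau-Lipschitz.  Within distance delta of the curve the far points of Y never
   attain the infimum, so there g is the minimum of the finitely many cones with apices
   gamma p, p in P.
   Two of these cones agree at gamma t exactly when f (gamma p) - f (gamma q) equals tau times
   a difference of distances independent of tau.  Hence for different slopes these tie sets
   are disjoint, unless the heights agree, in which case flatness leaves at most one tie point.
   So for all but countably many tau every tie set is null, and N is P together with the
   tie sets.  On a component of [a,b] - N the cones never tie, so by connectedness one cone is
   strictly smallest along it; it equals g on an open neighbourhood avoiding its apex. *)

section \<open>Flat curves\<close>

lemma inner_nonzero_if_near_multiples:
  fixes u v w :: "'a::real_inner"
  assumes u: "norm u = 1" and v: "norm (v - s *\<^sub>R u) \<le> \<theta> * \<bar>s\<bar>"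
    and w: "norm (w - r *\<^sub>R u) \<le> \<theta> * \<bar>r\<bar>"
    and sr: "s \<noteq> 0" "r \<noteq> 0" and \<theta>: "0 \<le> \<theta>" "\<theta> < 1/3"
  shows "v \<bullet> w \<noteq> 0"
proof -
  define e e' where "e = v - s *\<^sub>R u" and "e' = w - r *\<^sub>R u"
  have uu: "u \<bullet> u = 1"
    using u by (simp add: dot_square_norm)
  have "v \<bullet> w - s * r = s * (u \<bullet> e') + r * (e \<bullet> u) + e \<bullet> e'"
    by (simp add: e_def e'_def uu algebra_simps)
  also have "\<bar>\<dots>\<bar> \<le> \<bar>s * (u \<bullet> e')\<bar> + \<bar>r * (e \<bullet> u)\<bar> + \<bar>e \<bullet> e'\<bar>"
    by (rule order_trans[OF abs_triangle_ineq add_right_mono[OF abs_triangle_ineq]])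
  also have "\<dots> \<le> \<bar>s\<bar> * norm e' + \<bar>r\<bar> * norm e + norm e * norm e'"
    using Cauchy_Schwarz_ineq2[of u e'] Cauchy_Schwarz_ineq2[of e u] Cauchy_Schwarz_ineq2[of e e'] u
    by (intro add_mono) (auto simp: abs_mult intro: mult_left_mono)
  also have "\<dots> \<le> \<bar>s\<bar> * (\<theta> * \<bar>r\<bar>) + \<bar>r\<bar> * (\<theta> * \<bar>s\<bar>) + (\<theta> * \<bar>s\<bar>) * (\<theta> * \<bar>r\<bar>)"
    using v w \<theta> by (intro add_mono mult_mono mult_left_mono) (auto simp: e_def e'_def)
  also have "\<dots> = (2 * \<theta> + \<theta> * \<theta>) * \<bar>s * r\<bar>"
    by (simp add: abs_mult algebra_simps)
  also have "\<dots> < \<bar>s * r\<bar>"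
  proof -
    have "\<theta> * \<theta> \<le> \<theta> * (1/3)"
      using \<theta> by (intro mult_left_mono) auto
    with \<theta> have "2 * \<theta> + \<theta> * \<theta> < 1"
      by linarith
    from mult_strict_right_mono[OF this, of "\<bar>s * r\<bar>"] sr show ?thesis
      by simp
  qed
  finally show ?thesis
    by auto
qed

lemma theta_flat_chord:
  assumes flat: "theta_flat \<gamma> \<theta> u a b" and ab: "0 \<le> a" "a < b" "b \<le> 1"
    and st: "s \<in> {a..b}" "t \<in> {a..b}"
  shows "norm ((\<gamma> s - \<gamma> t) - (s - t) *\<^sub>R u) \<le> \<theta> * \<bar>s - t\<bar>"
  using flat st ab unfolding theta_flat_def by (simp add: infdist_zero)

lemma theta_flat_chords_not_orthogonal:
  fixes \<gamma> :: "real \<Rightarrow> 'a::euclidean_space"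
  assumes flat: "theta_flat \<gamma> \<theta> u a b" and ab: "0 \<le> a" "b \<le> 1"
    and \<theta>: "0 < \<theta>" "\<theta> < 1/3" and u: "norm u = 1"
    and pts: "s \<in> {a..b}" "t \<in> {a..b}" "p \<in> {a..b}" "q \<in> {a..b}" "s \<noteq> t" "p \<noteq> q"
  shows "(\<gamma> s - \<gamma> t) \<bullet> (\<gamma> p - \<gamma> q) \<noteq> 0"
proof -
  have "a < b"
    using pts by auto
  with assms show ?thesis
    by (intro inner_nonzero_if_near_multiples[OF u theta_flat_chord theta_flat_chord]) auto
qed

lemma theta_flat_inj_on:
  fixes \<gamma> :: "real \<Rightarrow> 'a::euclidean_space"
  assumes flat: "theta_flat \<gamma> \<theta> u a b" and ab: "0 \<le> a" "b \<le> 1"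
    and \<theta>: "0 < \<theta>" "\<theta> < 1/3" and u: "norm u = 1"
  shows "inj_on \<gamma> {a..b}"
proof (rule inj_onI, rule ccontr)
  fix s t assume "s \<in> {a..b}" "t \<in> {a..b}" "\<gamma> s = \<gamma> t" "s \<noteq> t"
  then show False
    using theta_flat_chords_not_orthogonal[OF assms, of s t s t] by simp
qed

text \<open>Equidistance from two points of the curve is a hyperplane condition, and a
  flat curve meets a hyperplane transversal to its chords at most once.\<close>
lemma theta_flat_equidistant_unique:
  fixes \<gamma> :: "real \<Rightarrow> 'a::euclidean_space"
  assumes flat: "theta_flat \<gamma> \<theta> u a b" and ab: "0 \<le> a" "b \<le> 1"
    and \<theta>: "0 < \<theta>" "\<theta> < 1/3" and u: "norm u = 1"
    and pq: "p \<in> {a..b}" "q \<in> {a..b}" "p \<noteq> q"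
    and s: "s \<in> {a..b}" "norm (\<gamma> s - \<gamma> p) = norm (\<gamma> s - \<gamma> q)"
    and t: "t \<in> {a..b}" "norm (\<gamma> t - \<gamma> p) = norm (\<gamma> t - \<gamma> q)"
  shows "s = t"
proof (rule ccontr)
  assume "s \<noteq> t"
  have "2 * (\<gamma> x \<bullet> (\<gamma> p - \<gamma> q)) = \<gamma> p \<bullet> \<gamma> p - \<gamma> q \<bullet> \<gamma> q"
    if "norm (\<gamma> x - \<gamma> p) = norm (\<gamma> x - \<gamma> q)" for x
  proof -
    have "(\<gamma> x - \<gamma> p) \<bullet> (\<gamma> x - \<gamma> p) = (\<gamma> x - \<gamma> q) \<bullet> (\<gamma> x - \<gamma> q)"
      using that by (simp add: dot_square_norm)
    then show ?thesis
      by (simp add: inner_commute algebra_simps)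
  qed
  from this[OF s(2)] this[OF t(2)] have "(\<gamma> s - \<gamma> t) \<bullet> (\<gamma> p - \<gamma> q) = 0"
    by (simp add: inner_diff_left)
  with theta_flat_chords_not_orthogonal[OF flat ab \<theta> u s(1) t(1) pq(1,2) \<open>s \<noteq> t\<close> pq(3)]
  show False
    by simp
qed

section \<open>Cones over the graph of a Lipschitz function\<close>

definition graph_cone :: "('a::real_normed_vector \<Rightarrow> real) \<Rightarrow> real \<Rightarrow> 'a \<Rightarrow> 'a \<Rightarrow> real" where
  "graph_cone f \<tau> c x = f c + \<tau> * norm (x - c)"

definition cone_inf :: "('a::real_normed_vector \<Rightarrow> real) \<Rightarrow> real \<Rightarrow> 'a set \<Rightarrow> 'a \<Rightarrow> real" where
  "cone_inf f \<tau> Y x = (INF c\<in>Y. graph_cone f \<tau> c x)"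

lemma conical_fun_eq_cone_inf:
  "conical_fun \<gamma> f a b P \<sigma> \<tau> = cone_inf f \<tau> (conical_Y \<gamma> a b P \<sigma>)"
  by (simp add: fun_eq_iff conical_fun_def cone_inf_def graph_cone_def)

lemma has_derivative_graph_cone:
  fixes c :: "'a::real_inner"
  assumes "x \<noteq> c"
  shows "(graph_cone f \<tau> c has_derivative (\<lambda>h. ((\<tau> / norm (x - c)) *\<^sub>R (x - c)) \<bullet> h)) (at x)"
proof -
  have "((\<lambda>x. norm (x - c)) has_derivative (\<lambda>h. h \<bullet> sgn (x - c))) (at x)"
    using has_derivative_compose[OF has_derivative_diff[OF has_derivative_ident has_derivative_const]
        has_derivative_norm[of "x - c"]] assms
    by simp
  then have "(graph_cone f \<tau> c has_derivative (\<lambda>h. 0 + \<tau> * (h \<bullet> sgn (x - c)))) (at x)"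
    unfolding graph_cone_def by (intro has_derivative_add has_derivative_const has_derivative_mult_right)
  then show ?thesis
    by (rule has_derivative_eq_rhs) (auto simp: sgn_div_norm inner_commute divide_inverse)
qed

lemma le_graph_cone:
  assumes "L-lipschitz_on S f" "L \<le> \<tau>" "x \<in> S" "c \<in> S"
  shows "f x \<le> graph_cone f \<tau> c x"
proof -
  have "f x - f c \<le> L * norm (x - c)"
    using lipschitz_onD[OF assms(1,3,4)] by (simp add: dist_real_def dist_norm)
  also have "\<dots> \<le> \<tau> * norm (x - c)"
    using assms(2) by (rule mult_right_mono) simp
  finally show ?thesis
    by (simp add: graph_cone_def)
qed

lemma graph_cone_le_add_norm:
  assumes "L-lipschitz_on S f" "x \<in> S" "c \<in> S"
  shows "graph_cone f \<tau> c x \<le> f x + (L + \<tau>) * norm (x - c)"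
  using lipschitz_onD[OF assms(1,3,2)]
  by (simp add: graph_cone_def dist_real_def dist_norm norm_minus_commute algebra_simps)

lemma graph_cone_le_graph_cone_if_closer:
  assumes lip: "L-lipschitz_on S f" and S: "x \<in> S" "c \<in> S" "y \<in> S"
    and closer: "(L + \<tau>) * norm (x - c) \<le> (\<tau> - L) * norm (x - y)"
  shows "graph_cone f \<tau> c x \<le> graph_cone f \<tau> y x"
proof -
  have "f x \<le> f y + L * norm (x - y)"
    using lipschitz_onD[OF lip S(1,3)] by (simp add: dist_real_def dist_norm)
  then show ?thesis
    using graph_cone_le_add_norm[OF lip S(1,2), of \<tau>] closer by (simp add: graph_cone_def algebra_simps)
qed

lemma bdd_below_graph_cones:
  assumes "L-lipschitz_on S f" "L \<le> \<tau>" "Y \<subseteq> S" "x \<in> S"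
  shows "bdd_below ((\<lambda>c. graph_cone f \<tau> c x) ` Y)"
  by (rule bdd_belowI[of _ "f x"]) (use le_graph_cone[OF assms(1,2,4)] assms(3) in blast)

lemma cone_inf_le_graph_cone:
  assumes "L-lipschitz_on S f" "L \<le> \<tau>" "Y \<subseteq> S" "x \<in> S" "c \<in> Y"
  shows "cone_inf f \<tau> Y x \<le> graph_cone f \<tau> c x"
  unfolding cone_inf_def by (rule cINF_lower[OF bdd_below_graph_cones[OF assms(1-4)] assms(5)])

lemma le_cone_inf:
  assumes "L-lipschitz_on S f" "L \<le> \<tau>" "Y \<subseteq> S" "Y \<noteq> {}" "x \<in> S"
  shows "f x \<le> cone_inf f \<tau> Y x"
  unfolding cone_inf_def using assms(4)
  by (rule cINF_greatest) (use le_graph_cone[OF assms(1,2,5)] assms(3) in blast)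

lemma cone_inf_eq_graph_cone:
  assumes "c \<in> Y" "\<And>y. y \<in> Y \<Longrightarrow> graph_cone f \<tau> c x \<le> graph_cone f \<tau> y x"
  shows "cone_inf f \<tau> Y x = graph_cone f \<tau> c x"
  unfolding cone_inf_def using assms by (intro cInf_eq_minimum) auto

lemma lipschitz_on_cone_inf:
  assumes lip: "L-lipschitz_on S f" and "L \<le> \<tau>" "Y \<subseteq> S" "Y \<noteq> {}"
  shows "\<tau>-lipschitz_on S (cone_inf f \<tau> Y)"
proof -
  have one_side: "cone_inf f \<tau> Y x \<le> cone_inf f \<tau> Y z + \<tau> * dist x z"
    if "x \<in> S" "z \<in> S" for x z
  proof -
    have "cone_inf f \<tau> Y x - \<tau> * dist x z \<le> graph_cone f \<tau> c z" if "c \<in> Y" for c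
    proof -
      have "\<tau> * norm (x - c) \<le> \<tau> * (norm (x - z) + norm (z - c))"
        using norm_triangle_ineq[of "x - z" "z - c"] lipschitz_on_nonneg[OF lip] assms(2)
        by (intro mult_left_mono) auto
      then have "\<tau> * norm (x - c) \<le> \<tau> * dist x z + \<tau> * norm (z - c)"
        by (simp add: dist_norm distrib_left)
      then show ?thesis
        using cone_inf_le_graph_cone[OF assms(1-3) \<open>x \<in> S\<close> that] by (simp add: graph_cone_def)
    qed
    then have "cone_inf f \<tau> Y x - \<tau> * dist x z \<le> cone_inf f \<tau> Y z"
      unfolding cone_inf_def[of f \<tau> Y z] using assms(4) by (intro cINF_greatest) auto
    then show ?thesis
      by simp
  qed
  show ?thesis
  proof (rule lipschitz_onI)
    fix x z assume "x \<in> S" "z \<in> S"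
    with one_side[of x z] one_side[of z x] show "dist (cone_inf f \<tau> Y x) (cone_inf f \<tau> Y z) \<le> \<tau> * dist x z"
      by (simp add: dist_real_def dist_commute abs_le_iff)
  qed (use lipschitz_on_nonneg[OF lip] assms(2) in simp)
qed

section \<open>Slopes at which two cones tie on a null set\<close>

lemma countable_nonnull_disjoint_family:
  assumes S: "S \<in> fmeasurable M"
    and A: "\<And>i. i \<in> I \<Longrightarrow> A i \<in> sets M" "\<And>i. i \<in> I \<Longrightarrow> A i \<subseteq> S"
    and disj: "disjoint_family_on A I"
  shows "countable {i \<in> I. A i \<notin> null_sets M}"
proof -
  have A_fm: "A i \<in> fmeasurable M" if "i \<in> I" for i
    using fmeasurableI2[OF S A(2)[OF that] A(1)[OF that]] .
  have few: "finite {i \<in> I. inverse (Suc n) < measure M (A i)}" for n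
  proof (rule ccontr)
    assume many: "infinite {i \<in> I. inverse (Suc n) < measure M (A i)}"
    define K where "K = Suc (nat \<lceil>measure M S\<rceil>)"
    obtain X where X: "finite X" "card X = Suc n * K"
      "X \<subseteq> {i \<in> I. inverse (Suc n) < measure M (A i)}"
      using infinite_arbitrarily_large[OF many] by blast
    have "real K = (\<Sum>i\<in>X. inverse (Suc n))"
      using X(2) by (simp only: sum_constant of_nat_mult) (simp del: of_nat_Suc)
    also have "\<dots> \<le> (\<Sum>i\<in>X. measure M (A i))"
      using X(3) by (intro sum_mono) auto
    also have "\<dots> = measure M (\<Union>i\<in>X. A i)"
      using X A_fm disjoint_family_on_mono[OF _ disj, of X]
      by (intro measure_finite_Union[symmetric]) (auto simp: fmeasurable_def less_top[symmetric])
    also have "\<dots> \<le> measure M S"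
      using A S X by (intro measure_mono_fmeasurable sets.finite_UN) auto
    finally show False
      unfolding K_def by linarith
  qed
  have "{i \<in> I. A i \<notin> null_sets M} \<subseteq> (\<Union>n. {i \<in> I. inverse (Suc n) < measure M (A i)})"
  proof
    fix i assume i: "i \<in> {i \<in> I. A i \<notin> null_sets M}"
    then have "measure M (A i) \<noteq> 0"
      by (metis (mono_tags) A(1) A_fm emeasure_eq_measure2 ennreal_0 mem_Collect_eq null_setsI)
    then have "0 < measure M (A i)"
      by (simp add: zero_less_measure_iff)
    then show "i \<in> (\<Union>n. {i \<in> I. inverse (Suc n) < measure M (A i)})"
      using reals_Archimedean i by blast
  qed
  then show ?thesis
    using few by (meson countable_UN countable_finite countable_subset countableI_type UNIV_I)
qed

definition tie_set ::
  "(real \<Rightarrow> 'a::real_normed_vector) \<Rightarrow> ('a \<Rightarrow> real) \<Rightarrow> real set \<Rightarrow> real \<Rightarrow> 'a \<Rightarrow> 'a \<Rightarrow> real set"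
  where "tie_set \<gamma> f T \<tau> c d = {t \<in> T. graph_cone f \<tau> c (\<gamma> t) = graph_cone f \<tau> d (\<gamma> t)}"

lemma closed_tie_set:
  assumes "closed T" "continuous_on T \<gamma>"
  shows "closed (tie_set \<gamma> f T \<tau> c d)"
proof -
  have "continuous_on T (\<lambda>t. graph_cone f \<tau> c (\<gamma> t) - graph_cone f \<tau> d (\<gamma> t))"
    unfolding graph_cone_def by (intro continuous_intros assms(2))
  from continuous_closed_preimage_constant[OF this assms(1), of 0]
  show ?thesis
    by (simp add: tie_set_def)
qed

text \<open>At a common point of two tie sets, \<open>f c - f d\<close> is the slope times a
  difference of distances that does not depend on the slope.\<close>
lemma disjoint_family_tie_sets:
  assumes "f c \<noteq> f d"
  shows "disjoint_family_on (\<lambda>\<tau>. tie_set \<gamma> f T \<tau> c d) UNIV"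
  unfolding disjoint_family_on_def
proof (intro ballI impI, rule ccontr)
  fix \<tau>1 \<tau>2 :: real assume "\<tau>1 \<noteq> \<tau>2" "tie_set \<gamma> f T \<tau>1 c d \<inter> tie_set \<gamma> f T \<tau>2 c d \<noteq> {}"
  then obtain t where "t \<in> tie_set \<gamma> f T \<tau>1 c d" "t \<in> tie_set \<gamma> f T \<tau>2 c d"
    by blast
  then have heights: "f c - f d = \<tau>1 * (norm (\<gamma> t - d) - norm (\<gamma> t - c))"
    and "f c - f d = \<tau>2 * (norm (\<gamma> t - d) - norm (\<gamma> t - c))"
    by (auto simp: tie_set_def graph_cone_def algebra_simps)
  then have "(\<tau>1 - \<tau>2) * (norm (\<gamma> t - d) - norm (\<gamma> t - c)) = 0"
    by (simp add: algebra_simps)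
  with \<open>\<tau>1 \<noteq> \<tau>2\<close> heights assms show False
    by simp
qed

lemma finite_tie_set_if_theta_flat:
  fixes \<gamma> :: "real \<Rightarrow> 'a::euclidean_space"
  assumes flat: "theta_flat \<gamma> \<theta> u a b" and ab: "0 \<le> a" "b \<le> 1"
    and \<theta>: "0 < \<theta>" "\<theta> < 1/3" and u: "norm u = 1"
    and pq: "p \<in> {a..b}" "q \<in> {a..b}" "p \<noteq> q"
    and heights: "f (\<gamma> p) = f (\<gamma> q)" and "\<tau> \<noteq> 0"
  shows "finite (tie_set \<gamma> f {a..b} \<tau> (\<gamma> p) (\<gamma> q))"
proof -
  let ?E = "{t \<in> {a..b}. norm (\<gamma> t - \<gamma> p) = norm (\<gamma> t - \<gamma> q)}"
  have "tie_set \<gamma> f {a..b} \<tau> (\<gamma> p) (\<gamma> q) = ?E"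
    using heights \<open>\<tau> \<noteq> 0\<close> by (auto simp: tie_set_def graph_cone_def)
  moreover have "finite ?E"
  proof (cases "?E = {}")
    case True
    show ?thesis
      unfolding True by simp
  next
    case False
    then obtain t where "t \<in> ?E"
      by blast
    then have "?E \<subseteq> {t}"
      using theta_flat_equidistant_unique[OF flat ab \<theta> u pq] by blast
    then show ?thesis
      by (rule finite_subset) simp
  qed
  ultimately show ?thesis
    by simp
qed

lemma countable_slopes_nonnull_tie_set:
  fixes \<gamma> :: "real \<Rightarrow> 'a::euclidean_space"
  assumes flat: "theta_flat \<gamma> \<theta> u a b" and ab: "0 \<le> a" "b \<le> 1"
    and \<theta>: "0 < \<theta>" "\<theta> < 1/3" and u: "norm u = 1"
    and cont: "continuous_on {a..b} \<gamma>"
    and pq: "p \<in> {a..b}" "q \<in> {a..b}" "p \<noteq> q"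
  shows "countable {\<tau> \<in> {0<..}. tie_set \<gamma> f {a..b} \<tau> (\<gamma> p) (\<gamma> q) \<notin> null_sets lborel}"
proof (cases "f (\<gamma> p) = f (\<gamma> q)")
  case True
  then have none: "{\<tau> \<in> {0<..}. tie_set \<gamma> f {a..b} \<tau> (\<gamma> p) (\<gamma> q) \<notin> null_sets lborel} = {}"
    using finite_tie_set_if_theta_flat[OF flat ab \<theta> u pq] by (auto intro: finite_imp_null_set_lborel)
  show ?thesis
    unfolding none by (rule countable_empty)
next
  case False
  let ?A = "\<lambda>\<tau>. tie_set \<gamma> f {a..b} \<tau> (\<gamma> p) (\<gamma> q)"
  show ?thesis
  proof (rule countable_nonnull_disjoint_family[where A = ?A])
    show "{a..b} \<in> fmeasurable lborel"
      using fmeasurable_cbox[of a b] by simp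
    show "?A \<tau> \<in> sets lborel" for \<tau>
      using closed_tie_set[OF closed_atLeastAtMost cont] by simp
    show "?A \<tau> \<subseteq> {a..b}" for \<tau>
      by (auto simp: tie_set_def)
    show "disjoint_family_on ?A {0<..}"
      using disjoint_family_tie_sets[where f = f and c = "\<gamma> p" and d = "\<gamma> q", OF False]
      by (rule disjoint_family_on_mono[rotated]) simp
  qed
qed

lemma exists_slope_with_null_tie_sets:
  fixes \<gamma> :: "real \<Rightarrow> 'a::euclidean_space"
  assumes flat: "theta_flat \<gamma> \<theta> u a b" and ab: "0 \<le> a" "b \<le> 1"
    and \<theta>: "0 < \<theta>" "\<theta> < 1/3" and u: "norm u = 1"
    and cont: "continuous_on {a..b} \<gamma>" and P: "finite P" "P \<subseteq> {a..b}"
    and \<tau>: "0 \<le> \<tau>0" "\<tau>0 < \<tau>1"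
  obtains \<tau> where "\<tau>0 < \<tau>" "\<tau> < \<tau>1"
    "\<And>p q. p \<in> P \<Longrightarrow> q \<in> P \<Longrightarrow> p \<noteq> q \<Longrightarrow>
       tie_set \<gamma> f {a..b} \<tau> (\<gamma> p) (\<gamma> q) \<in> null_sets lborel"
proof -
  define bad where "bad = (\<Union>p\<in>P. \<Union>q\<in>P - {p}.
    {\<tau> \<in> {0<..}. tie_set \<gamma> f {a..b} \<tau> (\<gamma> p) (\<gamma> q) \<notin> null_sets lborel})"
  have "countable bad"
    unfolding bad_def using P
    by (intro countable_UN countable_finite countable_slopes_nonnull_tie_set[OF flat ab \<theta> u cont]) auto
  moreover have "uncountable {\<tau>0<..<\<tau>1}"
    using \<tau> by (simp add: uncountable_open_interval)
  ultimately obtain \<tau> where "\<tau> \<in> {\<tau>0<..<\<tau>1}" "\<tau> \<notin> bad"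
    by (meson countable_subset subsetI)
  with \<tau> show ?thesis
    by (intro that) (auto simp: bad_def)
qed

lemma lipschitz_image_net_point_near:
  fixes \<gamma> :: "'a::metric_space \<Rightarrow> 'b::metric_space"
  assumes lip: "K-lipschitz_on T \<gamma>" and P: "P \<subseteq> T"
    and net: "\<And>t. t \<in> T \<Longrightarrow> \<exists>p\<in>P. dist t p < \<delta>"
    and "T \<noteq> {}" and x: "infdist x (\<gamma> ` T) < r"
  obtains p where "p \<in> P" "dist x (\<gamma> p) < r + K * \<delta>"
proof -
  have "bdd_below ((\<lambda>y. dist x y) ` \<gamma> ` T)"
    by (rule bdd_belowI[of _ 0]) auto
  then obtain t where t: "t \<in> T" "dist x (\<gamma> t) < r"
    using x \<open>T \<noteq> {}\<close> by (auto simp: infdist_def cINF_less_iff)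
  obtain p where p: "p \<in> P" "dist t p < \<delta>"
    using net[OF t(1)] by blast
  have "dist x (\<gamma> p) \<le> dist x (\<gamma> t) + dist (\<gamma> t) (\<gamma> p)"
    by (rule dist_triangle)
  also have "dist (\<gamma> t) (\<gamma> p) \<le> K * dist t p"
    using lipschitz_onD[OF lip t(1)] p P by auto
  also have "\<dots> \<le> K * \<delta>"
    using p lipschitz_on_nonneg[OF lip] by (intro mult_left_mono) auto
  finally show ?thesis
    using t p that by fastforce
qed

lemma connected_strict_argmin:
  fixes h :: "'i \<Rightarrow> 'a::topological_space \<Rightarrow> real"
  assumes J: "connected J" "J \<noteq> {}" and P: "finite P" "P \<noteq> {}"
    and cont: "\<And>q. q \<in> P \<Longrightarrow> continuous_on J (h q)"
    and no_tie: "\<And>q q' t. q \<in> P \<Longrightarrow> q' \<in> P \<Longrightarrow> q \<noteq> q' \<Longrightarrow> t \<in> J \<Longrightarrow> h q t \<noteq> h q' t"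
  obtains p where "p \<in> P" "\<And>q t. q \<in> P \<Longrightarrow> q \<noteq> p \<Longrightarrow> t \<in> J \<Longrightarrow> h p t < h q t"
proof -
  obtain t0 where t0: "t0 \<in> J"
    using J by blast
  obtain p where p: "p \<in> P" "\<And>q. q \<in> P \<Longrightarrow> h p t0 \<le> h q t0"
    using ex_is_arg_min_if_finite[OF P, of "\<lambda>q. h q t0"] by (auto simp: is_arg_min_def not_less)
  have "h p t < h q t" if q: "q \<in> P" "q \<noteq> p" and t: "t \<in> J" for q t
  proof (rule ccontr)
    assume "\<not> h p t < h q t"
    moreover have "connected ((\<lambda>s. h q s - h p s) ` J)"
      using cont p(1) q(1) J(1) by (intro connected_continuous_image continuous_intros) auto
    ultimately have "0 \<in> (\<lambda>s. h q s - h p s) ` J"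
      using p(2)[OF q(1)] t t0 unfolding connected_iff_interval by fastforce
    then show False
      using no_tie[OF q(1) p(1) q(2)] by auto
  qed
  with p(1) show ?thesis
    by (rule that)
qed

section \<open>The conical approximation\<close>

locale conical_approximation =
  fixes \<gamma> :: "real \<Rightarrow> 'a::euclidean_space" and f :: "'a \<Rightarrow> real"
    and L a b :: real and P :: "real set" and \<sigma> \<delta> \<tau> :: real
  assumes curve_lipschitz: "1-lipschitz_on {a..b} \<gamma>"
    and curve_inj: "inj_on \<gamma> {a..b}"
    and curve_in_box: "\<gamma> ` {a..b} \<subseteq> box 0 One"
    and f_lipschitz: "L-lipschitz_on (cbox 0 One) f"
    and slope: "L < \<tau>" "\<tau> \<le> 1"
    and net: "finite P" "P \<subseteq> {a..b}" "\<And>t. t \<in> {a..b} \<Longrightarrow> \<exists>p\<in>P. dist t p < \<delta>"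
    and radius: "0 < \<delta>" "4 * \<delta> \<le> (\<tau> - L) * (\<sigma> - \<delta>)"
    and interval: "a \<le> b"
begin

abbreviation g :: "'a \<Rightarrow> real" where
  "g \<equiv> conical_fun \<gamma> f a b P \<sigma> \<tau>"

abbreviation Y :: "'a set" where
  "Y \<equiv> conical_Y \<gamma> a b P \<sigma>"

lemma L_nonneg: "0 \<le> L"
  using lipschitz_on_nonneg[OF f_lipschitz] .

lemma delta_less_sigma: "\<delta> < \<sigma>"
proof -
  have "0 < (\<tau> - L) * (\<sigma> - \<delta>)"
    using radius by linarith
  with slope show ?thesis
    by (simp add: zero_less_mult_iff)
qed

lemma curve_in_cbox: "t \<in> {a..b} \<Longrightarrow> \<gamma> t \<in> cbox 0 One"
  using curve_in_box box_subset_cbox by blast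

lemma Y_subset: "Y \<subseteq> cbox 0 One"
  using net(2) curve_in_cbox by (auto simp: conical_Y_def)

lemma net_in_Y: "p \<in> P \<Longrightarrow> \<gamma> p \<in> Y"
  by (simp add: conical_Y_def)

lemma net_nonempty: "P \<noteq> {}"
  using net(3)[of a] interval by auto

lemma Y_nonempty: "Y \<noteq> {}"
  using net_nonempty net_in_Y by blast

lemma g_eq_cone_inf: "g = cone_inf f \<tau> Y"
  by (rule conical_fun_eq_cone_inf)

lemma lipschitz_g: "\<tau>-lipschitz_on (cbox 0 One) g"
  unfolding g_eq_cone_inf
  by (rule lipschitz_on_cone_inf[OF f_lipschitz _ Y_subset Y_nonempty]) (use slope in simp)

lemma near_net_point:
  assumes "infdist x (\<gamma> ` {a..b}) < r"
  obtains p where "p \<in> P" "norm (x - \<gamma> p) < r + \<delta>"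
  using lipschitz_image_net_point_near[OF curve_lipschitz net(2,3) _ assms] interval
  by (auto simp: dist_norm)

lemma abs_g_minus_f_le:
  assumes x: "x \<in> cbox 0 One"
  shows "\<bar>g x - f x\<bar> \<le> 2 * (\<sigma> + \<delta>)"
proof -
  have "f x \<le> g x"
    unfolding g_eq_cone_inf using slope
    by (intro le_cone_inf[OF f_lipschitz _ Y_subset Y_nonempty x]) simp
  moreover have "g x \<le> f x + 2 * (\<sigma> + \<delta>)"
  proof (cases "infdist x (\<gamma> ` {a..b}) < \<sigma>")
    case True
    then obtain p where p: "p \<in> P" "norm (x - \<gamma> p) < \<sigma> + \<delta>"
      by (rule near_net_point)
    then have p_in: "\<gamma> p \<in> cbox 0 One"
      using net(2) curve_in_cbox by blast
    have "g x \<le> graph_cone f \<tau> (\<gamma> p) x"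
      unfolding g_eq_cone_inf using slope
      by (intro cone_inf_le_graph_cone[OF f_lipschitz _ Y_subset x net_in_Y[OF p(1)]]) auto
    also have "\<dots> \<le> f x + (L + \<tau>) * norm (x - \<gamma> p)"
      by (rule graph_cone_le_add_norm[OF f_lipschitz x p_in])
    also have "\<dots> \<le> f x + 2 * (\<sigma> + \<delta>)"
      using p slope L_nonneg by (intro add_left_mono mult_mono) auto
    finally show ?thesis .
  next
    case False
    then have "x \<in> Y"
      using x by (simp add: conical_Y_def)
    then have "g x \<le> graph_cone f \<tau> x x"
      unfolding g_eq_cone_inf using slope
      by (intro cone_inf_le_graph_cone[OF f_lipschitz _ Y_subset x]) auto
    then show ?thesis
      using radius delta_less_sigma by (simp add: graph_cone_def)
  qed
  ultimately show ?thesis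
    by simp
qed

text \<open>A point of \<open>Y\<close> far from the curve loses against a net point within \<open>2 * \<delta>\<close> of \<open>x\<close>;
  this is what the hypothesis \<open>radius\<close> is for.\<close>
lemma g_eq_graph_cone_near_curve:
  assumes x: "x \<in> cbox 0 One" "infdist x (\<gamma> ` {a..b}) < \<delta>"
    and p: "p \<in> P" "\<And>q. q \<in> P \<Longrightarrow> graph_cone f \<tau> (\<gamma> p) x \<le> graph_cone f \<tau> (\<gamma> q) x"
  shows "g x = graph_cone f \<tau> (\<gamma> p) x"
  unfolding g_eq_cone_inf
proof (rule cone_inf_eq_graph_cone[OF net_in_Y[OF p(1)]])
  fix y assume y: "y \<in> Y"
  show "graph_cone f \<tau> (\<gamma> p) x \<le> graph_cone f \<tau> y x"
  proof (cases "y \<in> \<gamma> ` P")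
    case True
    with p(2) show ?thesis
      by auto
  next
    case False
    then have y_far: "\<sigma> \<le> infdist y (\<gamma> ` {a..b})" and y_in: "y \<in> cbox 0 One"
      using y by (auto simp: conical_Y_def)
    have "\<sigma> - \<delta> \<le> norm (x - y)"
      using infdist_triangle[of y "\<gamma> ` {a..b}" x] y_far x(2)
      by (simp add: dist_norm norm_minus_commute)
    obtain c where c: "c \<in> P" "norm (x - \<gamma> c) < \<delta> + \<delta>"
      using near_net_point[OF x(2)] by blast
    have "(L + \<tau>) * norm (x - \<gamma> c) \<le> 2 * (2 * \<delta>)"
      using c slope L_nonneg by (intro mult_mono) auto
    also have "\<dots> \<le> (\<tau> - L) * (\<sigma> - \<delta>)"
      using radius by simp
    also have "\<dots> \<le> (\<tau> - L) * norm (x - y)"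
      using \<open>\<sigma> - \<delta> \<le> norm (x - y)\<close> slope by (intro mult_left_mono) auto
    finally have "graph_cone f \<tau> (\<gamma> c) x \<le> graph_cone f \<tau> y x"
      using c(1) net(2) curve_in_cbox by (intro graph_cone_le_graph_cone_if_closer[OF f_lipschitz x(1) _ y_in]) auto
    with p(2)[OF c(1)] show ?thesis
      by linarith
  qed
qed

lemma SUP_abs_diff_le: "(SUP x \<in> cbox 0 One. \<bar>g x - f x\<bar>) \<le> 2 * (\<sigma> + \<delta>)"
proof (rule cSUP_least)
  have "(0::'a) \<in> cbox 0 One"
    by (simp add: mem_box)
  then show "cbox (0::'a) One \<noteq> {}"
    by blast
qed (rule abs_g_minus_f_le)

definition dominance_region :: "real \<Rightarrow> 'a set" where
  "dominance_region p =
     (box 0 One \<inter> {x. infdist x (\<gamma> ` {a..b}) < \<delta>} \<inter>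
      (\<Inter>q\<in>P - {p}. {x. graph_cone f \<tau> (\<gamma> p) x < graph_cone f \<tau> (\<gamma> q) x})) - {\<gamma> p}"

lemma open_dominance_region: "open (dominance_region p)"
  unfolding dominance_region_def graph_cone_def using net(1)
  by (intro open_Diff open_Int open_box open_INT open_Collect_less continuous_intros ballI closed_singleton)
     auto

lemma dominance_region_subset: "dominance_region p \<subseteq> cbox 0 One"
  unfolding dominance_region_def using box_subset_cbox by blast

lemma g_eq_graph_cone_dominance_region:
  assumes "p \<in> P" "x \<in> dominance_region p"
  shows "g x = graph_cone f \<tau> (\<gamma> p) x"
proof (rule g_eq_graph_cone_near_curve[OF _ _ assms(1)])
  show "x \<in> cbox 0 One"
    using assms(2) dominance_region_subset by blast
  show "infdist x (\<gamma> ` {a..b}) < \<delta>"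
    using assms(2) by (simp add: dominance_region_def)
  show "graph_cone f \<tau> (\<gamma> p) x \<le> graph_cone f \<tau> (\<gamma> q) x" if "q \<in> P" for q
    using assms(2) that by (cases "q = p") (auto simp: dominance_region_def less_imp_le)
qed

lemma has_derivative_g_dominance_region:
  assumes "p \<in> P" "x \<in> dominance_region p"
  shows "(g has_derivative (\<lambda>h. ((\<tau> / norm (x - \<gamma> p)) *\<^sub>R (x - \<gamma> p)) \<bullet> h)) (at x)"
proof (rule has_derivative_transform_within_open[OF _ open_dominance_region assms(2)])
  show "(graph_cone f \<tau> (\<gamma> p) has_derivative (\<lambda>h. ((\<tau> / norm (x - \<gamma> p)) *\<^sub>R (x - \<gamma> p)) \<bullet> h)) (at x)"
    using assms(2) by (intro has_derivative_graph_cone) (auto simp: dominance_region_def)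
qed (use g_eq_graph_cone_dominance_region[OF assms(1)] in simp)

definition exceptional :: "real set" where
  "exceptional = P \<union> (\<Union>p\<in>P. \<Union>q\<in>P - {p}. tie_set \<gamma> f {a..b} \<tau> (\<gamma> p) (\<gamma> q))"

lemma closed_exceptional: "closed exceptional"
  unfolding exceptional_def using net(1) lipschitz_on_continuous_on[OF curve_lipschitz]
  by (intro closed_Un[OF finite_imp_closed] closed_UN ballI closed_tie_set) auto

lemma exceptional_subset: "exceptional \<subseteq> {a..b}"
  using net(2) by (auto simp: exceptional_def tie_set_def)

lemma null_exceptional:
  assumes "\<And>p q. p \<in> P \<Longrightarrow> q \<in> P \<Longrightarrow> p \<noteq> q \<Longrightarrow>
             tie_set \<gamma> f {a..b} \<tau> (\<gamma> p) (\<gamma> q) \<in> null_sets lborel"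
  shows "exceptional \<in> null_sets lborel"
  unfolding exceptional_def using net(1) assms
  by (intro null_sets.Un[OF finite_imp_null_set_lborel] null_sets.finite_UN) auto

lemma component_in_dominance_region:
  assumes J: "J \<in> components ({a..b} - exceptional)"
  obtains p where "p \<in> P" "\<gamma> ` J \<subseteq> dominance_region p"
proof -
  have J_sub: "J \<subseteq> {a..b} - exceptional"
    using in_components_subset[OF J] .
  have cont: "continuous_on J (\<lambda>t. graph_cone f \<tau> (\<gamma> q) (\<gamma> t))" for q
    unfolding graph_cone_def using J_sub lipschitz_on_continuous_on[OF curve_lipschitz]
    by (intro continuous_intros) (auto elim: continuous_on_subset)
  have no_tie: "graph_cone f \<tau> (\<gamma> q) (\<gamma> t) \<noteq> graph_cone f \<tau> (\<gamma> q') (\<gamma> t)"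
    if "q \<in> P" "q' \<in> P" "q \<noteq> q'" "t \<in> J" for q q' t
    using that J_sub by (auto simp: exceptional_def tie_set_def)
  obtain p where p: "p \<in> P"
    and least: "\<And>q t. q \<in> P \<Longrightarrow> q \<noteq> p \<Longrightarrow> t \<in> J \<Longrightarrow>
                  graph_cone f \<tau> (\<gamma> p) (\<gamma> t) < graph_cone f \<tau> (\<gamma> q) (\<gamma> t)"
    using connected_strict_argmin[where h = "\<lambda>q t. graph_cone f \<tau> (\<gamma> q) (\<gamma> t)",
        OF in_components_connected[OF J] in_components_nonempty[OF J] net(1) net_nonempty cont no_tie]
    by blast
  have "\<gamma> t \<in> dominance_region p" if t: "t \<in> J" for t
  proof -
    have "t \<in> {a..b}" "t \<noteq> p"
      using t J_sub p by (auto simp: exceptional_def)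
    then have "\<gamma> t \<noteq> \<gamma> p"
      using curve_inj p net(2) by (auto dest: inj_onD)
    with \<open>t \<in> {a..b}\<close> show ?thesis
      using curve_in_box least[OF _ _ t] radius(1) by (auto simp: dominance_region_def)
  qed
  with p show ?thesis
    using that by blast
qed

lemma locally_graph_cone_on_component:
  assumes "J \<in> components ({a..b} - exceptional)"
  shows "\<exists>p \<in> exceptional.
           (\<forall>x \<in> \<gamma> ` J. g x = f (\<gamma> p) + \<tau> * norm (x - \<gamma> p)) \<and>
           (\<exists>U. open U \<and> \<gamma> ` J \<subseteq> U \<and> U \<subseteq> cbox 0 One \<and>
              (\<forall>x \<in> U. (g has_derivative
                  (\<lambda>h. ((\<tau> / norm (x - \<gamma> p)) *\<^sub>R (x - \<gamma> p)) \<bullet> h)) (at x)) \<and>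
              continuous_on U (\<lambda>x. (\<tau> / norm (x - \<gamma> p)) *\<^sub>R (x - \<gamma> p)))"
proof -
  obtain p where p: "p \<in> P" "\<gamma> ` J \<subseteq> dominance_region p"
    using component_in_dominance_region[OF assms] .
  show ?thesis
  proof (intro bexI[of _ p] conjI exI[of _ "dominance_region p"] ballI)
    show "g x = f (\<gamma> p) + \<tau> * norm (x - \<gamma> p)" if "x \<in> \<gamma> ` J" for x
      using g_eq_graph_cone_dominance_region[OF p(1)] p(2) that by (auto simp: graph_cone_def)
    show "continuous_on (dominance_region p) (\<lambda>x. (\<tau> / norm (x - \<gamma> p)) *\<^sub>R (x - \<gamma> p))"
      by (intro continuous_intros) (auto simp: dominance_region_def)
  qed (use p open_dominance_region dominance_region_subset has_derivative_g_dominance_region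
       in \<open>auto simp: exceptional_def\<close>)
qed

end

lemma conical_approximation_parameters:
  fixes \<gamma> :: "real \<Rightarrow> 'a::euclidean_space"
  assumes curve: "1-lipschitz_on {0..1} \<gamma>" and range: "\<gamma> ` {0..1} \<subseteq> box 0 One"
    and I: "0 \<le> a" "a \<le> b" "b \<le> 1" and u: "norm u = 1" and \<theta>: "0 < \<theta>" "\<theta> < 1/3"
    and flat: "theta_flat \<gamma> \<theta> u a b"
    and f: "L-lipschitz_on (cbox 0 One) f" "L < 1"
    and \<epsilon>: "0 < \<epsilon>" and \<alpha>: "0 < \<alpha>"
  obtains P \<sigma> \<delta> \<tau> where "conical_approximation \<gamma> f L a b P \<sigma> \<delta> \<tau>"
    "\<And>p q. p \<in> P \<Longrightarrow> q \<in> P \<Longrightarrow> p \<noteq> q \<Longrightarrow>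
       tie_set \<gamma> f {a..b} \<tau> (\<gamma> p) (\<gamma> q) \<in> null_sets lborel"
    "1 - \<alpha> < \<tau>" "\<tau> < 1" "2 * (\<sigma> + \<delta>) < \<epsilon>"
proof -
  have L: "0 \<le> L"
    using lipschitz_on_nonneg[OF f(1)] .
  define \<tau>0 where "\<tau>0 = (max L (1 - \<alpha>) + 1) / 2"
  define \<sigma> where "\<sigma> = \<epsilon> / 8"
  define \<delta> where "\<delta> = min (\<sigma> / 2) ((\<tau>0 - L) * \<sigma> / 8)"
  have \<tau>0: "0 \<le> \<tau>0" "L < \<tau>0" "1 - \<alpha> < \<tau>0" "\<tau>0 < 1"
    using L f(2) \<alpha> unfolding \<tau>0_def by auto
  have \<delta>: "0 < \<delta>" "\<delta> \<le> \<sigma> / 2" "\<delta> \<le> (\<tau>0 - L) * \<sigma> / 8"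
    using \<epsilon> \<tau>0 unfolding \<delta>_def \<sigma>_def by auto
  have "\<exists>P. finite P \<and> P \<subseteq> {a..b} \<and> {a..b} \<subseteq> (\<Union>p\<in>P. ball p \<delta>)"
    using seq_compact_imp_totally_bounded[OF compact_imp_seq_compact[OF compact_Icc]] \<delta>(1)
    by simp
  then obtain P where P: "finite P" "P \<subseteq> {a..b}" "{a..b} \<subseteq> (\<Union>p\<in>P. ball p \<delta>)"
    by blast
  have cont: "continuous_on {a..b} \<gamma>"
    using I by (intro continuous_on_subset[OF lipschitz_on_continuous_on[OF curve]]) auto
  obtain \<tau> where \<tau>: "\<tau>0 < \<tau>" "\<tau> < 1"
    and null: "\<And>p q. p \<in> P \<Longrightarrow> q \<in> P \<Longrightarrow> p \<noteq> q \<Longrightarrow>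
                 tie_set \<gamma> f {a..b} \<tau> (\<gamma> p) (\<gamma> q) \<in> null_sets lborel"
    using exists_slope_with_null_tie_sets[OF flat I(1,3) \<theta> u cont P(1,2) \<tau>0(1,4)] by blast
  have "4 * \<delta> \<le> (\<tau>0 - L) * (\<sigma> / 2)"
    using \<delta>(3) by simp
  also have "\<dots> \<le> (\<tau> - L) * (\<sigma> - \<delta>)"
    using \<tau> \<delta> \<tau>0 by (intro mult_mono) auto
  finally have radius: "4 * \<delta> \<le> (\<tau> - L) * (\<sigma> - \<delta>)" .
  have approx: "conical_approximation \<gamma> f L a b P \<sigma> \<delta> \<tau>"
  proof
    show "1-lipschitz_on {a..b} \<gamma>"
      using I by (intro lipschitz_on_subset[OF curve]) auto
    show "inj_on \<gamma> {a..b}"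
      by (rule theta_flat_inj_on[OF flat I(1,3) \<theta> u])
    show "\<gamma> ` {a..b} \<subseteq> box 0 One"
      using range I by auto
    show "L < \<tau>" "\<tau> \<le> 1"
      using \<tau> \<tau>0 by auto
    show "\<exists>p\<in>P. dist t p < \<delta>" if "t \<in> {a..b}" for t
      using subsetD[OF P(3) that] by (auto simp: dist_commute)
  qed (fact f(1) P(1,2) \<delta>(1) radius I(2))+
  have "2 * (\<sigma> + \<delta>) < \<epsilon>"
    using \<delta> \<epsilon> unfolding \<sigma>_def by simp
  with approx null show ?thesis
    using \<tau> \<tau>0(3) by (intro that) auto
qed

theorem lemma3p10:
  fixes \<gamma> :: "real \<Rightarrow> 'a::euclidean_space"
    and f :: "'a \<Rightarrow> real"
    and u :: 'a
    and a b \<theta> \<epsilon> \<alpha> :: real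
  assumes curve: "lipschitz_curve 1 \<gamma>"
    and range: "\<gamma> ` {0..1} \<subseteq> box 0 One"
    and I: "0 \<le> a" "a \<le> b" "b \<le> 1"
    and u: "norm u = 1"
    and theta: "0 < \<theta>" "\<theta> < 1/3"
    and flat: "theta_flat \<gamma> \<theta> u a b"
    and eps: "\<epsilon> > 0"
    and f_lip: "\<exists>L<1. L-lipschitz_on (cbox 0 One) f"
    and alpha: "0 < \<alpha>" "\<alpha> < 1"
  shows "\<exists>g N. alpha_conical \<alpha> \<gamma> f a b g \<and>
           closed N \<and> N \<in> null_sets lborel \<and> N \<subseteq> {a..b} \<and>
           (\<exists>L<1. L-lipschitz_on (cbox 0 One) g) \<and>
           (SUP x \<in> cbox 0 One. \<bar>g x - f x\<bar>) < \<epsilon> \<and>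
           (\<exists>\<tau>. 1 - \<alpha> < \<tau> \<and> \<tau> < 1 \<and>
              (\<forall>J \<in> components ({a..b} - N). \<exists>p \<in> N.
                 (\<forall>x \<in> \<gamma> ` J. g x = f (\<gamma> p) + \<tau> * norm (x - \<gamma> p)) \<and>
                 (\<exists>U. open U \<and> \<gamma> ` J \<subseteq> U \<and> U \<subseteq> cbox 0 One \<and>
                    (\<forall>x \<in> U. (g has_derivative
                        (\<lambda>h. ((\<tau> / norm (x - \<gamma> p)) *\<^sub>R (x - \<gamma> p)) \<bullet> h)) (at x)) \<and>
                    continuous_on U (\<lambda>x. (\<tau> / norm (x - \<gamma> p)) *\<^sub>R (x - \<gamma> p)))))"
proof -
  obtain L where L: "L < 1" "L-lipschitz_on (cbox 0 One) f"
    using f_lip by blast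
  have "1-lipschitz_on {0..1} \<gamma>"
    using curve by (simp add: lipschitz_curve_def)
  then obtain P \<sigma> \<delta> \<tau> where approx: "conical_approximation \<gamma> f L a b P \<sigma> \<delta> \<tau>"
    and null: "\<And>p q. p \<in> P \<Longrightarrow> q \<in> P \<Longrightarrow> p \<noteq> q \<Longrightarrow>
                 tie_set \<gamma> f {a..b} \<tau> (\<gamma> p) (\<gamma> q) \<in> null_sets lborel"
    and \<tau>: "1 - \<alpha> < \<tau>" "\<tau> < 1" and small: "2 * (\<sigma> + \<delta>) < \<epsilon>"
    using conical_approximation_parameters[OF _ range I u theta flat L(2,1) eps alpha(1)] by blast
  interpret conical_approximation \<gamma> f L a b P \<sigma> \<delta> \<tau>
    by (rule approx)
  have conical: "alpha_conical \<alpha> \<gamma> f a b g"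
    unfolding alpha_conical_def using net radius delta_less_sigma \<tau>
    by (intro exI[of _ P] exI[of _ \<sigma>] exI[of _ \<tau>]) auto
  have approximates: "(SUP x \<in> cbox 0 One. \<bar>g x - f x\<bar>) < \<epsilon>"
    using SUP_abs_diff_le small by linarith
  have contraction: "\<exists>L<1. L-lipschitz_on (cbox 0 One) g"
    using lipschitz_g \<tau> by blast
  show ?thesis
    by (intro exI[of _ g] exI[of _ exceptional] conjI conical closed_exceptional
        null_exceptional[OF null] exceptional_subset contraction approximates \<tau>
        ballI locally_graph_cone_on_component exI[of _ \<tau>])
qed

end
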